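(* Let $J\subseteq S$ and $w\in\mathfrak{S}_n^J$. Then $w$ is $(J,231)$-avoiding if and only if $\mathrm{inv}(w)$ is $J$-compressed.
   Context: $\mathfrak{S}_n$ is the symmetric group on $[n]$, $s_i=(i,i+1)$, $S=\{s_1,\dots,s_{n-1}\}$, one-line notation $w=w_1\cdots w_n$, $\mathrm{inv}(w)=\{(i,j):i<j,\ w_i>w_j\}$, and $\mathrm{des}(w)=\{(i,j)\in\mathrm{inv}(w): w_i=w_j+1\}$. For $J\subseteq S$, $\mathfrak{S}_n^J$ is the set of $w$ with $w_i<w_{i+1}$ whenever $s_i\in J$ (the minimal length coset representatives, $w<_S ws$ for $s\in J$ in the weak order $u\le_S v\iff\mathrm{inv}(u)\subseteq\mathrm{inv}(v)$). Writing $J=S\setminus\{s_{j_1},\dots,s_{j_r}\}$ with $j_1<\dots<j_r$, the $J$-regions are $\{1,\dots,j_1\},\{j_1+1,\dots,j_2\},\dots,\{j_r+1,\dots,n\}$. $w\in\mathfrak{S}_n^J$ is $(J,231)$-avoiding if there are no indices $i<j<k$ in pairwise different $J$-regions with $w_k<w_i<w_j$ and $w_i=w_k+1$. The set $\mathrm{inv}(w)$ is $J$-compressed if whenever $i<j<k$ lie in pairwise different $J$-regions and $(i,k)\in\mathrm{des}(w)$, then $(i,j)\in\mathrm{inv}(w)$. *)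

theory Defs
  imports "HOL-Combinatorics.Combinatorics"
begin

text \<open>Permutations w of [n] are functions with w permutes {1..n}; the one-line
 notation is w 1, ..., w n.\<close>

definition simple_refl :: "nat \<Rightarrow> (nat \<Rightarrow> nat)" where
  "simple_refl i = transpose i (Suc i)"

definition simple_refls :: "nat \<Rightarrow> (nat \<Rightarrow> nat) set" where
  "simple_refls n = {simple_refl i | i. 1 \<le> i \<and> i < n}"

definition inv_set :: "nat \<Rightarrow> (nat \<Rightarrow> nat) \<Rightarrow> (nat \<times> nat) set" where
  "inv_set n w = {(i, j). 1 \<le> i \<and> i < j \<and> j \<le> n \<and> w i > w j}"

definition des_set :: "nat \<Rightarrow> (nat \<Rightarrow> nat) \<Rightarrow> (nat \<times> nat) set" where
  "des_set n w = {(i, j) \<in> inv_set n w. w i = w j + 1}"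

definition parabolic_quot :: "nat \<Rightarrow> (nat \<Rightarrow> nat) set \<Rightarrow> (nat \<Rightarrow> nat) set" where
  "parabolic_quot n J = {w. w permutes {1..n} \<and>
      (\<forall>i. 1 \<le> i \<and> i < n \<and> simple_refl i \<in> J \<longrightarrow> w i < w (Suc i))}"

definition same_region :: "(nat \<Rightarrow> nat) set \<Rightarrow> nat \<Rightarrow> nat \<Rightarrow> bool" where
  "same_region J i j = (\<forall>k. i \<le> k \<and> k < j \<longrightarrow> simple_refl k \<in> J)"

definition J231_avoiding :: "nat \<Rightarrow> (nat \<Rightarrow> nat) set \<Rightarrow> (nat \<Rightarrow> nat) \<Rightarrow> bool" where
  "J231_avoiding n J w = (\<not> (\<exists>i j k. 1 \<le> i \<and> i < j \<and> j < k \<and> k \<le> n \<and>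
      \<not> same_region J i j \<and> \<not> same_region J j k \<and> \<not> same_region J i k \<and>
      w k < w i \<and> w i < w j \<and> w i = w k + 1))"

definition J_compressed :: "nat \<Rightarrow> (nat \<Rightarrow> nat) set \<Rightarrow> (nat \<Rightarrow> nat) \<Rightarrow> bool" where
  "J_compressed n J w = (\<forall>i j k. 1 \<le> i \<and> i < j \<and> j < k \<and> k \<le> n \<and>
      \<not> same_region J i j \<and> \<not> same_region J j k \<and> \<not> same_region J i k \<and>
      (i, k) \<in> des_set n w \<longrightarrow> (i, j) \<in> inv_set n w)"

end

theory Submission
  imports Defs
begin

text \<open>For a descent pair (i, k) and i < j, the 231 pattern asks w i < w j, while compression
 asks that (i, j) be an inversion, i.e. w j < w i; for an injective w exactly one of the two
 holds.\<close>

lemma J231_avoiding_iff_J_compressed: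
  assumes "inj_on w {1..n}"
  shows "J231_avoiding n J w \<longleftrightarrow> J_compressed n J w"
proof -
  have pattern_iff_no_inversion:
    "(w k < w i \<and> w i < w j \<and> w i = w k + 1) \<longleftrightarrow>
     (i, k) \<in> des_set n w \<and> (i, j) \<notin> inv_set n w"
    if "1 \<le> i" "i < j" "j < k" "k \<le> n" for i j k
  proof -
    have "w i \<noteq> w j"
      using inj_onD[OF assms, of i j] that by auto
    then show ?thesis
      using that by (auto simp: des_set_def inv_set_def)
  qed
  show ?thesis
    unfolding J231_avoiding_def J_compressed_def
    using pattern_iff_no_inversion by blast
qed

theorem lemma3p7:
  fixes n :: nat and J :: "(nat \<Rightarrow> nat) set" and w :: "nat \<Rightarrow> nat"
  assumes "J \<subseteq> simple_refls n"
    and "w \<in> parabolic_quot n J"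
  shows "J231_avoiding n J w \<longleftrightarrow> J_compressed n J w"
proof -
  from assms(2) have "w permutes {1..n}"
    by (simp add: parabolic_quot_def)
  then have "inj_on w {1..n}"
    by (rule permutes_inj_on)
  then show ?thesis
    by (rule J231_avoiding_iff_J_compressed)
qed

end
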